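(* Let $\langle\vec l,\vec c\rangle$ be a ladder system coloring and $E\subseteq\omega_1$ a stationary and co-stationary set. Then $\mathbb{P}_E(\vec l,\vec c)$ is $\mathsf{stat}_{\omega_1\setminus E}$-pc.
   Context: A ladder system is $\vec l=\langle l_\alpha:\alpha\in\omega_1\cap\mathrm{Lim}\rangle$ with each $l_\alpha\subseteq\alpha$ cofinal in $\alpha$ of order type $\omega$; $l_{\alpha,n}$ is the $n$-th element of $l_\alpha$ and $l_\alpha^n=\{l_{\alpha,m}:m\ge n\}$. A ladder system coloring is $\langle\vec l,\vec c\rangle$ with $\vec c=\langle c_\alpha:l_\alpha\to\omega\rangle$. $\mathbb{P}_E(\vec l,\vec c)$ is the set of finite partial functions $p$ from $E\cap\mathrm{Lim}$ to $\omega$ such that $\bigcup_{\alpha\in\mathrm{dom}(p)}c_\alpha\restriction l_\alpha^{p(\alpha)}$ is a function, ordered by $q\le p$ iff $q\supseteq p$. For $X\subseteq\omega_1$, $\mathsf{stat}_X$ is the family of stationary subsets of $\omega_1$ contained in $X$; a poset is $\mathsf{stat}_X$-pc if for every $S\in\mathsf{stat}_X$ and every $\langle p_\alpha:\alpha\in S\rangle$ there is $S'\in\mathsf{stat}_S$ with $\{p_\alpha:\alpha\in S'\}$ centered (every finite subset has a common lower bound). *)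

theory Defs
  imports Main "HOL-Library.Countable_Set"
begin

text \<open>omega_1 is modelled by a well-ordered type 'a which is uncountable and all of
whose proper initial segments are countable (these assumptions appear in the theorem).\<close>

definition is_limit :: "'a::wellorder \<Rightarrow> bool" where
  "is_limit \<alpha> \<longleftrightarrow> (\<exists>y. y < \<alpha>) \<and> (\<forall>y<\<alpha>. \<exists>z. y < z \<and> z < \<alpha>)"

definition unbounded :: "'a::wellorder set \<Rightarrow> bool" where
  "unbounded C \<longleftrightarrow> (\<forall>x. \<exists>y\<in>C. x \<le> y)"

definition closed_set :: "'a::wellorder set \<Rightarrow> bool" where
  "closed_set C \<longleftrightarrow> (\<forall>\<alpha>. is_limit \<alpha> \<and> (\<forall>y<\<alpha>. \<exists>z\<in>C. y \<le> z \<and> z < \<alpha>) \<longrightarrow> \<alpha> \<in> C)"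

definition club :: "'a::wellorder set \<Rightarrow> bool" where
  "club C \<longleftrightarrow> closed_set C \<and> unbounded C"

definition stationary :: "'a::wellorder set \<Rightarrow> bool" where
  "stationary S \<longleftrightarrow> (\<forall>C. club C \<longrightarrow> S \<inter> C \<noteq> {})"

text \<open>A ladder system: for each limit alpha, l alpha is the strictly increasing
enumeration of the ladder l_alpha (so l alpha n = l_{alpha,n}), cofinal in alpha.\<close>

definition ladder_system :: "('a::wellorder \<Rightarrow> nat \<Rightarrow> 'a) \<Rightarrow> bool" where
  "ladder_system l \<longleftrightarrow> (\<forall>\<alpha>. is_limit \<alpha> \<longrightarrow>
      strict_mono (l \<alpha>) \<and> (\<forall>n. l \<alpha> n < \<alpha>) \<and> (\<forall>y<\<alpha>. \<exists>n. y < l \<alpha> n))"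

definition ladder :: "('a \<Rightarrow> nat \<Rightarrow> 'a) \<Rightarrow> 'a \<Rightarrow> 'a set" where
  "ladder l \<alpha> = range (l \<alpha>)"

definition ladder_tail :: "('a \<Rightarrow> nat \<Rightarrow> 'a) \<Rightarrow> 'a \<Rightarrow> nat \<Rightarrow> 'a set" where
  "ladder_tail l \<alpha> n = {l \<alpha> m | m. m \<ge> n}"

text \<open>The coloring c alpha : l_alpha -> omega is represented by c alpha restricted to
ladder l alpha; values outside the ladder are irrelevant.\<close>

definition PE :: "'a::wellorder set \<Rightarrow> ('a \<Rightarrow> nat \<Rightarrow> 'a) \<Rightarrow> ('a \<Rightarrow> 'a \<Rightarrow> nat)
    \<Rightarrow> ('a \<rightharpoonup> nat) set" where
  "PE E l c = {p. finite (dom p) \<and> dom p \<subseteq> E \<inter> {\<alpha>. is_limit \<alpha>} \<and>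
     (\<forall>\<alpha> \<beta> n m \<xi>. p \<alpha> = Some n \<longrightarrow> p \<beta> = Some m \<longrightarrow>
        \<xi> \<in> ladder_tail l \<alpha> n \<longrightarrow> \<xi> \<in> ladder_tail l \<beta> m \<longrightarrow> c \<alpha> \<xi> = c \<beta> \<xi>)}"

text \<open>Order: q \<le> p iff q extends p. Centered: every finite subset has a common lower bound in P.\<close>

definition centered :: "('a \<rightharpoonup> nat) set \<Rightarrow> ('a \<rightharpoonup> nat) set \<Rightarrow> bool" where
  "centered P A \<longleftrightarrow> (\<forall>F. finite F \<and> F \<subseteq> A \<longrightarrow> (\<exists>q\<in>P. \<forall>p\<in>F. p \<subseteq>\<^sub>m q))"

definition stat_pc :: "'a::wellorder set \<Rightarrow> ('a \<rightharpoonup> nat) set \<Rightarrow> bool" where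
  "stat_pc X P \<longleftrightarrow> (\<forall>S pp. stationary S \<and> S \<subseteq> X \<and> (\<forall>\<alpha>\<in>S. pp \<alpha> \<in> P) \<longrightarrow>
      (\<exists>S'. stationary S' \<and> S' \<subseteq> S \<and> centered P (pp ` S')))"

end

theory Submission
  imports Defs
begin

text \<open>Let \<open>p\<^sub>\<alpha> \<in> \<bbbP>\<^sub>E\<close> for \<open>\<alpha>\<close> in a stationary \<open>S \<subseteq> \<omega>\<^sub>1 - E\<close>; we may take every \<open>\<alpha>\<close> limit.
  As \<open>\<alpha> \<notin> E \<supseteq> dom p\<^sub>\<alpha>\<close>, the part of \<open>p\<^sub>\<alpha>\<close> visible below \<open>\<alpha>\<close> -- its domain below \<open>\<alpha>\<close> and the finitely
  many points below \<open>\<alpha>\<close> of the ladders \<open>l\<^sub>\<beta>\<close>, \<open>\<beta> \<in> dom p\<^sub>\<alpha>\<close>, \<open>\<beta> > \<alpha>\<close> -- is a finite subset of \<open>\<alpha>\<close>, so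
  by Fodor's lemma it lies below a fixed \<open>\<delta>\<close> on a stationary set. Below \<open>\<delta>\<close> there are only
  countably many possibilities for \<open>p\<^sub>\<alpha>\<close> and for the colours that the ladders above \<open>\<alpha>\<close> put
  on points \<open>\<le> \<delta>\<close>, so these are constant on a smaller stationary set. Intersecting with a club
  of closure points also gives \<open>dom p\<^sub>\<alpha> \<subseteq> \<alpha>'\<close> for \<open>\<alpha> < \<alpha>'\<close>. Now any two of the remaining
  conditions agree on common points of their domains and ladders, so the union of finitely
  many of them is a common extension.\<close>

lemma limit_cofinal_above:
  assumes "is_limit \<alpha>" "\<forall>y<\<alpha>. \<exists>z\<in>D. y \<le> z \<and> z < \<alpha>" "y < \<alpha>"
  shows "\<exists>z\<in>D. y < z \<and> z < \<alpha>"
proof -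
  obtain w where "y < w" "w < \<alpha>" using assms(1,3) unfolding is_limit_def by blast
  then show ?thesis using assms(2) by (meson less_le_trans)
qed

lemma club_mem_if_closure_point:
  assumes "club C" "\<And>y. y \<le> f y" "\<And>y. f y \<in> C" "is_limit \<gamma>" "\<And>y. y < \<gamma> \<Longrightarrow> f y < \<gamma>"
  shows "\<gamma> \<in> C"
proof -
  have "\<forall>y<\<gamma>. \<exists>z\<in>C. y \<le> z \<and> z < \<gamma>" using assms(2,3,5) by blast
  then show ?thesis using assms(1,4) unfolding club_def closed_set_def by blast
qed

lemma stationary_mono: "stationary S \<Longrightarrow> S \<subseteq> T \<Longrightarrow> stationary T"
  unfolding stationary_def by blast

locale omega_one =
  assumes uncountable_UNIV: "\<not> countable (UNIV :: 'a::wellorder set)"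
    and countable_segment: "\<And>x::'a. countable {y. y < x}"
begin

lemma countable_bounded:
  assumes "countable (A :: 'a set)"
  shows "\<exists>b. \<forall>a\<in>A. a < b"
proof -
  have "countable (\<Union>a\<in>A. insert a {y. y < a})" using assms countable_segment by auto
  then obtain b where "b \<notin> (\<Union>a\<in>A. insert a {y. y < a})" using uncountable_UNIV by (metis UNIV_eq_I)
  then show ?thesis by (auto simp: not_less_iff_gr_or_eq)
qed

lemma countable_atMost: "countable {..x :: 'a}"
proof -
  have "{..x} = insert x {y. y < x}" by (auto simp: le_less)
  then show ?thesis using countable_segment by simp
qed

lemma limit_of_increasing_seq:
  fixes x :: "nat \<Rightarrow> 'a"
  assumes inc: "\<And>n. x n < x (Suc n)"
  shows "\<exists>\<gamma>. is_limit \<gamma> \<and> (\<forall>n. x n < \<gamma>) \<and> (\<forall>y<\<gamma>. \<exists>n. y < x n)"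
proof -
  obtain b where b: "\<forall>n. x n < b" using countable_bounded[of "range x"] by auto
  define \<gamma> where "\<gamma> = (LEAST u. \<forall>n. x n \<le> u)"
  have "\<forall>n. x n \<le> \<gamma>" unfolding \<gamma>_def by (rule LeastI[of _ b]) (use b in \<open>auto intro: less_imp_le\<close>)
  then have below: "\<forall>n. x n < \<gamma>" using inc by (meson less_le_trans)
  have cofinal: "\<forall>y<\<gamma>. \<exists>n. y < x n"
    using Least_le[of "\<lambda>u. \<forall>n. x n \<le> u"] unfolding \<gamma>_def by (meson leD not_le_imp_less)
  then have "is_limit \<gamma>" unfolding is_limit_def using below by blast
  with below cofinal show ?thesis by blast
qed

lemma exists_limit_closure_point:
  fixes H :: "'a \<Rightarrow> 'a set"
  assumes H: "\<And>\<alpha>. countable (H \<alpha>)"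
  shows "\<exists>\<gamma>. is_limit \<gamma> \<and> a \<le> \<gamma> \<and> (\<forall>\<alpha><\<gamma>. \<forall>\<beta>\<in>H \<alpha>. \<beta> < \<gamma>)"
proof -
  have "\<exists>b. \<forall>z\<in>insert y (\<Union>\<alpha>\<in>{..y}. H \<alpha>). z < b" for y
    by (rule countable_bounded) (simp add: countable_atMost H)
  then obtain g where g: "\<And>y. y < g y" "\<And>y \<alpha> \<beta>. \<alpha> \<le> y \<Longrightarrow> \<beta> \<in> H \<alpha> \<Longrightarrow> \<beta> < g y"
    by (metis atMost_iff insertCI UN_I)
  define x where "x = rec_nat a (\<lambda>_. g)"
  have x_Suc: "x (Suc n) = g (x n)" for n by (simp add: x_def)
  obtain \<gamma> where \<gamma>: "is_limit \<gamma>" "\<And>n. x n < \<gamma>" "\<And>y. y < \<gamma> \<Longrightarrow> \<exists>n. y < x n"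
    using limit_of_increasing_seq[of x] g(1) x_Suc by metis
  have "\<beta> < \<gamma>" if "\<alpha> < \<gamma>" "\<beta> \<in> H \<alpha>" for \<alpha> \<beta>
  proof -
    obtain n where "\<alpha> < x n" using \<gamma>(3) \<open>\<alpha> < \<gamma>\<close> by blast
    then have "\<beta> < x (Suc n)" using g(2)[OF less_imp_le \<open>\<beta> \<in> H \<alpha>\<close>] x_Suc by simp
    then show ?thesis using \<gamma>(2) less_trans by blast
  qed
  moreover have "a \<le> \<gamma>" using \<gamma>(2)[of 0] by (simp add: x_def)
  ultimately show ?thesis using \<gamma>(1) by blast
qed

lemma club_closure_points:
  fixes H :: "'a \<Rightarrow> 'a set"
  assumes H: "\<And>\<alpha>. countable (H \<alpha>)"
  shows "club {\<gamma>. \<forall>\<alpha><\<gamma>. \<forall>\<beta>\<in>H \<alpha>. \<beta> < \<gamma>}"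
proof -
  let ?C = "{\<gamma>. \<forall>\<alpha><\<gamma>. \<forall>\<beta>\<in>H \<alpha>. \<beta> < \<gamma>}"
  have "closed_set ?C"
    unfolding closed_set_def
  proof (intro allI impI CollectI ballI)
    fix \<gamma> \<alpha> \<beta> assume lim: "is_limit \<gamma> \<and> (\<forall>y<\<gamma>. \<exists>z\<in>?C. y \<le> z \<and> z < \<gamma>)"
      and "\<alpha> < \<gamma>" "\<beta> \<in> H \<alpha>"
    then obtain z where "z \<in> ?C" "\<alpha> < z" "z < \<gamma>"
      using limit_cofinal_above[of \<gamma> ?C \<alpha>] by blast
    then have "\<beta> < z" using \<open>\<beta> \<in> H \<alpha>\<close> by blast
    with \<open>z < \<gamma>\<close> show "\<beta> < \<gamma>" by simp
  qed
  moreover have "unbounded ?C"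
    unfolding unbounded_def
  proof
    fix x0
    obtain \<gamma> where "x0 \<le> \<gamma>" "\<forall>\<alpha><\<gamma>. \<forall>\<beta>\<in>H \<alpha>. \<beta> < \<gamma>"
      using exists_limit_closure_point[of H] H by blast
    then show "\<exists>y\<in>?C. x0 \<le> y" by blast
  qed
  ultimately show ?thesis by (simp add: club_def)
qed

lemma club_limits: "club {\<alpha>::'a. is_limit \<alpha>}"
  using exists_limit_closure_point[of "\<lambda>_. {}"]
  unfolding club_def closed_set_def unbounded_def by blast

lemma club_INT:
  fixes C :: "'b \<Rightarrow> 'a set"
  assumes X: "countable X" and C: "\<And>k. k \<in> X \<Longrightarrow> club (C k)"
  shows "club (\<Inter>k\<in>X. C k)"
proof -
  have "closed_set (\<Inter>k\<in>X. C k)"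
    unfolding closed_set_def
  proof (intro allI impI INT_I)
    fix \<alpha> k assume lim: "is_limit \<alpha> \<and> (\<forall>y<\<alpha>. \<exists>z\<in>\<Inter>k\<in>X. C k. y \<le> z \<and> z < \<alpha>)" and "k \<in> X"
    then have "\<forall>y<\<alpha>. \<exists>z\<in>C k. y \<le> z \<and> z < \<alpha>" by blast
    with lim C[OF \<open>k \<in> X\<close>] show "\<alpha> \<in> C k" unfolding club_def closed_set_def by blast
  qed
  moreover have "unbounded (\<Inter>k\<in>X. C k)"
    unfolding unbounded_def
  proof
    fix x0
    have "\<forall>k y. \<exists>z. k \<in> X \<longrightarrow> y \<le> z \<and> z \<in> C k"
      using C unfolding club_def unbounded_def by blast
    then obtain f where f: "\<And>k y. k \<in> X \<Longrightarrow> y \<le> f k y \<and> f k y \<in> C k" by metis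
    have "countable ((\<lambda>k. f k y) ` X)" for y using X by simp
    then obtain \<gamma> where \<gamma>: "is_limit \<gamma>" "x0 \<le> \<gamma>" "\<forall>y<\<gamma>. \<forall>\<beta>\<in>(\<lambda>k. f k y) ` X. \<beta> < \<gamma>"
      using exists_limit_closure_point[where H="\<lambda>y. (\<lambda>k. f k y) ` X" and a=x0] by blast
    have "\<gamma> \<in> C k" if "k \<in> X" for k
    proof (rule club_mem_if_closure_point[OF C[OF that], of "f k"])
      show "\<And>y. y < \<gamma> \<Longrightarrow> f k y < \<gamma>" using \<gamma>(3) that by blast
    qed (use f[OF that] \<gamma>(1) in auto)
    then show "\<exists>y\<in>\<Inter>k\<in>X. C k. x0 \<le> y" using \<gamma>(2) by blast
  qed
  ultimately show ?thesis by (simp add: club_def)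
qed

lemma club_Int:
  assumes "club C" "club (D :: 'a set)"
  shows "club (C \<inter> D)"
  using club_INT[of "{C, D}" id] assms by auto

lemma club_diagonal_Inter:
  fixes C :: "'a \<Rightarrow> 'a set"
  assumes C: "\<And>\<delta>. club (C \<delta>)"
  shows "club {\<alpha>. \<forall>\<delta><\<alpha>. \<alpha> \<in> C \<delta>}"
proof -
  have "closed_set {\<alpha>. \<forall>\<delta><\<alpha>. \<alpha> \<in> C \<delta>}"
    unfolding closed_set_def
  proof (intro allI impI CollectI)
    fix \<alpha> \<delta> assume lim: "is_limit \<alpha> \<and> (\<forall>y<\<alpha>. \<exists>z\<in>{\<alpha>. \<forall>\<delta><\<alpha>. \<alpha> \<in> C \<delta>}. y \<le> z \<and> z < \<alpha>)"
      and "\<delta> < \<alpha>"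
    have "\<exists>z\<in>C \<delta>. y \<le> z \<and> z < \<alpha>" if "y < \<alpha>" for y
    proof -
      have "max y \<delta> < \<alpha>" using that \<open>\<delta> < \<alpha>\<close> by simp
      then obtain z where "z \<in> {\<alpha>. \<forall>\<delta><\<alpha>. \<alpha> \<in> C \<delta>}" "max y \<delta> < z" "z < \<alpha>"
        using limit_cofinal_above[OF conjunct1[OF lim] conjunct2[OF lim]] by blast
      then show ?thesis by (auto intro: less_imp_le)
    qed
    with lim C[of \<delta>] show "\<alpha> \<in> C \<delta>" unfolding club_def closed_set_def by blast
  qed
  moreover have "unbounded {\<alpha>. \<forall>\<delta><\<alpha>. \<alpha> \<in> C \<delta>}"
    unfolding unbounded_def
  proof
    fix x0
    have "\<forall>\<delta> y. \<exists>z. y \<le> z \<and> z \<in> C \<delta>" using C unfolding club_def unbounded_def by blast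
    then obtain f where f: "\<And>\<delta> y. y \<le> f \<delta> y \<and> f \<delta> y \<in> C \<delta>" by metis
    from countable_atMost obtain \<gamma> where \<gamma>: "is_limit \<gamma>" "x0 \<le> \<gamma>" "\<forall>y<\<gamma>. \<forall>\<beta>\<in>(\<lambda>\<delta>. f \<delta> y) ` {..y}. \<beta> < \<gamma>"
      using exists_limit_closure_point[where H="\<lambda>y. (\<lambda>\<delta>. f \<delta> y) ` {..y}" and a=x0]
      by blast
    have "\<gamma> \<in> C \<delta>" if "\<delta> < \<gamma>" for \<delta>
    proof (rule club_mem_if_closure_point[OF C, of "\<lambda>y. f \<delta> (max y \<delta>)"])
      fix y assume "y < \<gamma>"
      then show "f \<delta> (max y \<delta>) < \<gamma>" using \<gamma>(3) \<open>\<delta> < \<gamma>\<close> by simp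
    qed (use f \<gamma>(1) in \<open>auto intro: order.trans[OF max.cobounded1]\<close>)
    then show "\<exists>\<alpha>\<in>{\<alpha>. \<forall>\<delta><\<alpha>. \<alpha> \<in> C \<delta>}. x0 \<le> \<alpha>" using \<gamma>(2) by blast
  qed
  ultimately show ?thesis by (simp add: club_def)
qed

lemma stationary_Int_club:
  assumes "stationary S" "club (C :: 'a set)"
  shows "stationary (S \<inter> C)"
  using assms club_Int unfolding stationary_def by (metis inf_assoc)

lemma pressing_down:
  assumes S: "stationary (S :: 'a set)" and regressive: "\<And>\<alpha>. \<alpha> \<in> S \<Longrightarrow> f \<alpha> < \<alpha>"
  shows "\<exists>\<delta>. stationary {\<alpha>\<in>S. f \<alpha> = \<delta>}"
proof (rule ccontr)
  assume "\<nexists>\<delta>. stationary {\<alpha>\<in>S. f \<alpha> = \<delta>}"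
  then have "\<forall>\<delta>. \<exists>C. club C \<and> {\<alpha>\<in>S. f \<alpha> = \<delta>} \<inter> C = {}"
    unfolding stationary_def by blast
  then obtain C where C: "\<And>\<delta>. club (C \<delta>)" "\<And>\<delta>. {\<alpha>\<in>S. f \<alpha> = \<delta>} \<inter> C \<delta> = {}"
    by metis
  have "club {\<alpha>. \<forall>\<delta><\<alpha>. \<alpha> \<in> C \<delta>}" by (rule club_diagonal_Inter[OF C(1)])
  then have "S \<inter> {\<alpha>. \<forall>\<delta><\<alpha>. \<alpha> \<in> C \<delta>} \<noteq> {}" using S unfolding stationary_def by blast
  then obtain \<alpha> where "\<alpha> \<in> S" "\<forall>\<delta><\<alpha>. \<alpha> \<in> C \<delta>" by blast
  then have "\<alpha> \<in> C (f \<alpha>)" using regressive by blast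
  then show False using C(2)[of "f \<alpha>"] \<open>\<alpha> \<in> S\<close> by blast
qed

lemma stationary_fibre_of_countable:
  assumes S: "stationary (S :: 'a set)" and X: "countable X" and K: "\<And>\<alpha>. \<alpha> \<in> S \<Longrightarrow> K \<alpha> \<in> X"
  shows "\<exists>k. stationary {\<alpha>\<in>S. K \<alpha> = k}"
proof (rule ccontr)
  assume "\<nexists>k. stationary {\<alpha>\<in>S. K \<alpha> = k}"
  then have "\<forall>k. \<exists>C. club C \<and> {\<alpha>\<in>S. K \<alpha> = k} \<inter> C = {}"
    unfolding stationary_def by blast
  then obtain C where C: "\<And>k. club (C k)" "\<And>k. {\<alpha>\<in>S. K \<alpha> = k} \<inter> C k = {}"
    by metis
  have "club (\<Inter>k\<in>X. C k)" by (rule club_INT[OF X C(1)])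
  then have "S \<inter> (\<Inter>k\<in>X. C k) \<noteq> {}" using S unfolding stationary_def by blast
  then obtain \<alpha> where "\<alpha> \<in> S" "\<alpha> \<in> (\<Inter>k\<in>X. C k)" by blast
  then have "\<alpha> \<in> C (K \<alpha>)" using K by blast
  then show False using C(2)[of "K \<alpha>"] \<open>\<alpha> \<in> S\<close> by blast
qed

lemma pressing_down_finite:
  assumes S: "stationary (S :: 'a set)" and nonzero: "\<And>\<alpha>. \<alpha> \<in> S \<Longrightarrow> \<exists>y. y < \<alpha>"
    and F: "\<And>\<alpha>. \<alpha> \<in> S \<Longrightarrow> finite (F \<alpha>) \<and> F \<alpha> \<subseteq> {..<\<alpha>}"
  shows "\<exists>\<delta>. stationary {\<alpha>\<in>S. \<delta> < \<alpha> \<and> F \<alpha> \<subseteq> {..\<delta>}}"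
proof -
  define f where "f \<alpha> = Max (insert (SOME y. y < \<alpha>) (F \<alpha>))" for \<alpha>
  have f: "f \<alpha> < \<alpha> \<and> F \<alpha> \<subseteq> {..f \<alpha>}" if "\<alpha> \<in> S" for \<alpha>
    using F[OF that] someI_ex[OF nonzero[OF that]] unfolding f_def by auto
  then obtain \<delta> where "stationary {\<alpha>\<in>S. f \<alpha> = \<delta>}"
    using pressing_down[OF S, of f] by blast
  moreover have "{\<alpha>\<in>S. f \<alpha> = \<delta>} \<subseteq> {\<alpha>\<in>S. \<delta> < \<alpha> \<and> F \<alpha> \<subseteq> {..\<delta>}}" using f by blast
  ultimately show ?thesis using stationary_mono by blast
qed

end

lemma countable_finite_maps:
  assumes "countable A"
  shows "countable {m :: 'a \<rightharpoonup> 'b::countable. finite (dom m) \<and> dom m \<subseteq> A}"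
proof -
  have "Map.graph ` {m :: 'a \<rightharpoonup> 'b. finite (dom m) \<and> dom m \<subseteq> A} \<subseteq> {G. finite G \<and> G \<subseteq> A \<times> UNIV}"
    by (fastforce dest: graph_domD)
  moreover have "countable {G. finite G \<and> G \<subseteq> A \<times> (UNIV :: 'b set)}"
    using assms by (intro countable_Collect_finite_subset) auto
  ultimately have "countable (Map.graph ` {m :: 'a \<rightharpoonup> 'b. finite (dom m) \<and> dom m \<subseteq> A})"
    by (rule countable_subset)
  moreover have "inj (Map.graph :: ('a \<rightharpoonup> 'b) \<Rightarrow> _)"
  proof (rule injI, rule ext)
    fix m1 m2 :: "'a \<rightharpoonup> 'b" and x assume "Map.graph m1 = Map.graph m2"
    then show "m1 x = m2 x" by (metis in_graphD in_graphI not_Some_eq)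
  qed
  ultimately show ?thesis by (blast intro: countable_image_inj_on inj_on_subset)
qed

definition coherent :: "('a \<Rightarrow> nat \<Rightarrow> 'a) \<Rightarrow> ('a \<Rightarrow> 'a \<Rightarrow> nat) \<Rightarrow> ('a \<rightharpoonup> nat) \<Rightarrow> ('a \<rightharpoonup> nat) \<Rightarrow> bool"
  where "coherent l c p q \<longleftrightarrow> (\<forall>\<beta>\<in>dom p \<inter> dom q. p \<beta> = q \<beta>) \<and>
    (\<forall>\<beta> \<gamma> n m \<xi>. p \<beta> = Some n \<longrightarrow> q \<gamma> = Some m \<longrightarrow>
       \<xi> \<in> ladder_tail l \<beta> n \<longrightarrow> \<xi> \<in> ladder_tail l \<gamma> m \<longrightarrow> c \<beta> \<xi> = c \<gamma> \<xi>)"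

lemma coherent_refl: "p \<in> PE E l c \<Longrightarrow> coherent l c p p"
  unfolding PE_def coherent_def by blast

lemma coherent_sym: "coherent l c p q \<Longrightarrow> coherent l c q p"
  unfolding coherent_def by (metis Int_commute)

lemma PE_domD: "p \<in> PE E l c \<Longrightarrow> \<beta> \<in> dom p \<Longrightarrow> \<beta> \<in> E \<and> is_limit \<beta>"
  unfolding PE_def by blast

lemma centered_if_pairwise_coherent:
  assumes A: "A \<subseteq> PE E l c" and coh: "\<And>p q. p \<in> A \<Longrightarrow> q \<in> A \<Longrightarrow> coherent l c p q"
  shows "centered (PE E l c) A"
  unfolding centered_def
proof (intro allI impI)
  fix F assume F: "finite F \<and> F \<subseteq> A"
  define q where
    "q \<beta> = (if \<exists>p\<in>F. \<beta> \<in> dom p then (SOME p. p \<in> F \<and> \<beta> \<in> dom p) \<beta> else None)" for \<beta>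
  have q_Some: "q \<beta> = Some n \<longleftrightarrow> (\<exists>p\<in>F. p \<beta> = Some n)" for \<beta> n
  proof (cases "\<exists>p\<in>F. \<beta> \<in> dom p")
    case True
    let ?p = "SOME p. p \<in> F \<and> \<beta> \<in> dom p"
    have p: "?p \<in> F" "\<beta> \<in> dom ?p" using someI_ex[of "\<lambda>p. p \<in> F \<and> \<beta> \<in> dom p"] True by auto
    have agree: "p' \<beta> = ?p \<beta>" if "p' \<in> F" "\<beta> \<in> dom p'" for p'
      using coh[of p' ?p] F p that unfolding coherent_def by blast
    have q: "q \<beta> = ?p \<beta>" using True unfolding q_def by simp
    show ?thesis
    proof
      assume "q \<beta> = Some n"
      then show "\<exists>p\<in>F. p \<beta> = Some n" using p(1) q by auto
    next
      assume "\<exists>p\<in>F. p \<beta> = Some n"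
      then obtain p' where "p' \<in> F" "p' \<beta> = Some n" by blast
      then show "q \<beta> = Some n" using agree[of p'] q by (simp add: domI)
    qed
  qed (auto simp: q_def)
  then have dom_q: "dom q = (\<Union>p\<in>F. dom p)" by (auto simp: dom_def)
  have "q \<in> PE E l c"
    unfolding PE_def
  proof (intro CollectI conjI allI impI)
    show "finite (dom q)" using F A unfolding dom_q PE_def by auto
    show "dom q \<subseteq> E \<inter> {\<alpha>. is_limit \<alpha>}" using F A PE_domD unfolding dom_q by blast
    fix \<beta> \<gamma> n m \<xi> assume "q \<beta> = Some n" "q \<gamma> = Some m"
      and \<xi>: "\<xi> \<in> ladder_tail l \<beta> n" "\<xi> \<in> ladder_tail l \<gamma> m"
    then obtain p1 p2 where "p1 \<in> F" "p2 \<in> F" "p1 \<beta> = Some n" "p2 \<gamma> = Some m"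
      unfolding q_Some by blast
    with \<xi> show "c \<beta> \<xi> = c \<gamma> \<xi>" using coh[of p1 p2] F unfolding coherent_def by blast
  qed
  moreover have "p \<subseteq>\<^sub>m q" if "p \<in> F" for p
    unfolding map_le_def using q_Some that by (metis domD)
  ultimately show "\<exists>q\<in>PE E l c. \<forall>p\<in>F. p \<subseteq>\<^sub>m q" by blast
qed

lemma ladder_tail_less:
  assumes "ladder_system l" "is_limit \<beta>" "\<xi> \<in> ladder_tail l \<beta> n"
  shows "\<xi> < \<beta> \<and> \<xi> \<in> ladder l \<beta>"
  using assms unfolding ladder_system_def ladder_tail_def ladder_def by auto

lemma finite_ladder_below:
  assumes ls: "ladder_system l" and "is_limit \<beta>" "\<alpha> < \<beta>"
  shows "finite (ladder l \<beta> \<inter> {..<\<alpha>})"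
proof -
  have mono: "strict_mono (l \<beta>)" and "\<forall>y<\<beta>. \<exists>n. y < l \<beta> n"
    using ls \<open>is_limit \<beta>\<close> unfolding ladder_system_def by auto
  then obtain N where "\<alpha> < l \<beta> N" using \<open>\<alpha> < \<beta>\<close> by blast
  have "ladder l \<beta> \<inter> {..<\<alpha>} \<subseteq> l \<beta> ` {..<N}"
  proof (clarsimp simp: ladder_def)
    fix m assume "l \<beta> m < \<alpha>"
    then have "l \<beta> m < l \<beta> N" using \<open>\<alpha> < l \<beta> N\<close> by simp
    then show "l \<beta> m \<in> l \<beta> ` {..<N}" using mono by (simp add: strict_mono_less)
  qed
  then show ?thesis by (rule finite_subset) simp
qed

definition footprint :: "('a::wellorder \<Rightarrow> nat \<Rightarrow> 'a) \<Rightarrow> ('a \<rightharpoonup> nat) \<Rightarrow> 'a \<Rightarrow> 'a set" where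
  "footprint l p \<alpha> = (dom p \<union> (\<Union>\<beta>\<in>dom p \<inter> {\<alpha><..}. ladder l \<beta>)) \<inter> {..<\<alpha>}"

lemma finite_footprint:
  assumes "ladder_system l" "p \<in> PE E l c"
  shows "finite (footprint l p \<alpha>)"
proof -
  have fin: "finite (dom p)" using assms(2) unfolding PE_def by blast
  have "footprint l p \<alpha> \<subseteq> dom p \<union> (\<Union>\<beta>\<in>dom p \<inter> {\<alpha><..}. ladder l \<beta> \<inter> {..<\<alpha>})"
    unfolding footprint_def by blast
  moreover have "finite (ladder l \<beta> \<inter> {..<\<alpha>})" if "\<beta> \<in> dom p \<inter> {\<alpha><..}" for \<beta>
    using finite_ladder_below[OF assms(1)] PE_domD[OF assms(2)] that by auto
  ultimately show ?thesis using fin by (meson finite_Int finite_UN_I finite_UnI finite_subset)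
qed

text \<open>The colours put on \<open>\<xi>\<close> by the ladders of \<open>p\<close> above \<open>\<alpha>\<close>; for \<open>p \<in> PE E l c\<close> they
  do not depend on the choice of \<open>\<beta>\<close>.\<close>

definition upper_colors ::
  "('a::wellorder \<Rightarrow> nat \<Rightarrow> 'a) \<Rightarrow> ('a \<Rightarrow> 'a \<Rightarrow> nat) \<Rightarrow> ('a \<rightharpoonup> nat) \<Rightarrow> 'a \<Rightarrow> 'a \<rightharpoonup> nat" where
  "upper_colors l c p \<alpha> \<xi> =
    (if \<exists>\<beta> n. \<alpha> < \<beta> \<and> p \<beta> = Some n \<and> \<xi> \<in> ladder_tail l \<beta> n
     then Some (c (SOME \<beta>. \<exists>n. \<alpha> < \<beta> \<and> p \<beta> = Some n \<and> \<xi> \<in> ladder_tail l \<beta> n) \<xi>)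
     else None)"

lemma upper_colors_eq:
  assumes "p \<in> PE E l c" "\<alpha> < \<beta>" "p \<beta> = Some n" "\<xi> \<in> ladder_tail l \<beta> n"
  shows "upper_colors l c p \<alpha> \<xi> = Some (c \<beta> \<xi>)"
proof -
  let ?P = "\<lambda>\<beta>. \<exists>n. \<alpha> < \<beta> \<and> p \<beta> = Some n \<and> \<xi> \<in> ladder_tail l \<beta> n"
  obtain n' where "p (Eps ?P) = Some n'" "\<xi> \<in> ladder_tail l (Eps ?P) n'"
    using someI[of ?P \<beta>] assms(2-4) by blast
  then have "c (Eps ?P) \<xi> = c \<beta> \<xi>"
    using coherent_refl[OF assms(1)] assms(3,4) unfolding coherent_def by blast
  then show ?thesis using assms(2-4) unfolding upper_colors_def by auto
qed

lemma dom_upper_colors: "dom (upper_colors l c p \<alpha>) \<subseteq> (\<Union>\<beta>\<in>dom p \<inter> {\<alpha><..}. ladder l \<beta>)"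
  unfolding upper_colors_def ladder_tail_def ladder_def by (fastforce split: if_splits)

definition trace ::
  "('a::wellorder \<Rightarrow> nat \<Rightarrow> 'a) \<Rightarrow> ('a \<Rightarrow> 'a \<Rightarrow> nat) \<Rightarrow> ('a \<rightharpoonup> nat) \<Rightarrow> 'a \<Rightarrow> 'a \<Rightarrow> ('a \<rightharpoonup> nat) \<times> ('a \<rightharpoonup> nat)" where
  "trace l c p \<alpha> \<delta> = (p |` {..\<delta>}, upper_colors l c p \<alpha> |` {..\<delta>})"

lemma coherent_if_equal_traces:
  assumes ls: "ladder_system l" and p1: "p1 \<in> PE E l c" and p2: "p2 \<in> PE E l c"
    and "\<alpha>1 \<notin> E" "\<alpha>2 \<notin> E" and below: "dom p1 \<subseteq> {..<\<alpha>2}"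
    and fp1: "footprint l p1 \<alpha>1 \<subseteq> {..\<delta>}" and fp2: "footprint l p2 \<alpha>2 \<subseteq> {..\<delta>}"
    and tr: "trace l c p1 \<alpha>1 \<delta> = trace l c p2 \<alpha>2 \<delta>"
  shows "coherent l c p1 p2"
proof -
  have agree: "p1 \<beta> = p2 \<beta>" if "\<beta> \<le> \<delta>" for \<beta>
    using tr that unfolding trace_def by (metis atMost_iff prod.inject restrict_in)
  have agree_upper: "upper_colors l c p1 \<alpha>1 \<xi> = upper_colors l c p2 \<alpha>2 \<xi>" if "\<xi> \<le> \<delta>" for \<xi>
    using tr that unfolding trace_def by (metis atMost_iff prod.inject restrict_in)
  have in_fp2: "\<beta> \<le> \<delta>" if "\<beta> \<in> dom p2" "\<beta> < \<alpha>2" for \<beta>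
    using fp2 that unfolding footprint_def by blast
  have "p1 \<beta> = p2 \<beta>" if "\<beta> \<in> dom p1" "\<beta> \<in> dom p2" for \<beta>
    using agree in_fp2 below that by blast
  moreover have "c \<beta> \<xi> = c \<gamma> \<xi>"
    if \<beta>: "p1 \<beta> = Some n" "\<xi> \<in> ladder_tail l \<beta> n" and \<gamma>: "p2 \<gamma> = Some m" "\<xi> \<in> ladder_tail l \<gamma> m"
    for \<beta> \<gamma> n m \<xi>
  proof (cases "\<gamma> < \<alpha>2")
    case True
    then have "p1 \<gamma> = Some m" using agree in_fp2 \<gamma>(1) by (metis domI)
    then show ?thesis using coherent_refl[OF p1] \<beta> \<gamma>(2) unfolding coherent_def by blast
  next
    case False
    have "\<gamma> \<noteq> \<alpha>2" using PE_domD[OF p2] \<gamma>(1) \<open>\<alpha>2 \<notin> E\<close> by blast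
    with False have "\<alpha>2 < \<gamma>" by simp
    have "\<beta> < \<alpha>2" "is_limit \<beta>" using below PE_domD[OF p1] \<beta>(1) by blast+
    then have "\<xi> < \<alpha>2" using ladder_tail_less[OF ls _ \<beta>(2)] by (meson less_trans)
    moreover have "\<xi> \<in> ladder l \<gamma>" "\<gamma> \<in> dom p2"
      using ladder_tail_less[OF ls _ \<gamma>(2)] PE_domD[OF p2] \<gamma>(1) by blast+
    ultimately have "\<xi> \<in> footprint l p2 \<alpha>2" using \<open>\<alpha>2 < \<gamma>\<close> unfolding footprint_def by blast
    then have "\<xi> \<le> \<delta>" using fp2 by blast
    have up2: "upper_colors l c p2 \<alpha>2 \<xi> = Some (c \<gamma> \<xi>)"
      by (rule upper_colors_eq[OF p2 \<open>\<alpha>2 < \<gamma>\<close> \<gamma>])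
    show ?thesis
    proof (cases "\<alpha>1 < \<beta>")
      case True
      then have "upper_colors l c p1 \<alpha>1 \<xi> = Some (c \<beta> \<xi>)" by (rule upper_colors_eq[OF p1 _ \<beta>])
      then show ?thesis using up2 agree_upper[OF \<open>\<xi> \<le> \<delta>\<close>] by simp
    next
      case False
      have "\<beta> \<noteq> \<alpha>1" using PE_domD[OF p1] \<beta>(1) \<open>\<alpha>1 \<notin> E\<close> by blast
      with False have "\<beta> \<in> footprint l p1 \<alpha>1" using \<beta>(1) unfolding footprint_def by auto
      then have "p2 \<beta> = Some n" using fp1 agree \<beta>(1) by (metis atMost_iff subsetD)
      then show ?thesis using coherent_refl[OF p2] \<beta>(2) \<gamma> unfolding coherent_def by blast
    qed
  qed
  ultimately show ?thesis unfolding coherent_def by blast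
qed

lemma (in omega_one) stationary_coherent_subset:
  fixes S :: "'a set"
  assumes ls: "ladder_system l" and S: "stationary S" and SE: "S \<inter> E = {}"
    and pp: "\<And>\<alpha>. \<alpha> \<in> S \<Longrightarrow> pp \<alpha> \<in> PE E l c"
  shows "\<exists>S'\<subseteq>S. stationary S' \<and> (\<forall>\<alpha>1\<in>S'. \<forall>\<alpha>2\<in>S'. coherent l c (pp \<alpha>1) (pp \<alpha>2))"
proof -
  let ?S1 = "S \<inter> {\<alpha>. is_limit \<alpha>}"
  have S1: "stationary ?S1" by (rule stationary_Int_club[OF S club_limits])
  have "finite (footprint l (pp \<alpha>) \<alpha>) \<and> footprint l (pp \<alpha>) \<alpha> \<subseteq> {..<\<alpha>}" if "\<alpha> \<in> ?S1" for \<alpha>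
    using finite_footprint[OF ls pp] that unfolding footprint_def by auto
  moreover have "\<exists>y. y < \<alpha>" if "\<alpha> \<in> ?S1" for \<alpha> using that unfolding is_limit_def by blast
  ultimately obtain \<delta> where
    S2: "stationary {\<alpha>\<in>?S1. \<delta> < \<alpha> \<and> footprint l (pp \<alpha>) \<alpha> \<subseteq> {..\<delta>}}" (is "stationary ?S2")
    using pressing_down_finite[OF S1, of "\<lambda>\<alpha>. footprint l (pp \<alpha>) \<alpha>"] by blast
  define X where "X = {m :: 'a \<rightharpoonup> nat. finite (dom m) \<and> dom m \<subseteq> {..\<delta>}}"
  have "countable X" unfolding X_def using countable_atMost by (rule countable_finite_maps)
  then have "countable (X \<times> X)" by simp
  moreover have "trace l c (pp \<alpha>) \<alpha> \<delta> \<in> X \<times> X" if "\<alpha> \<in> ?S2" for \<alpha>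
  proof -
    have "dom (upper_colors l c (pp \<alpha>) \<alpha> |` {..\<delta>}) \<subseteq> footprint l (pp \<alpha>) \<alpha>"
      using dom_upper_colors[of l c "pp \<alpha>" \<alpha>] that unfolding footprint_def by auto
    then have "finite (dom (upper_colors l c (pp \<alpha>) \<alpha> |` {..\<delta>}))"
      using finite_footprint[OF ls pp] that by (blast intro: finite_subset)
    moreover have "finite (dom (pp \<alpha>))" using pp that unfolding PE_def by blast
    ultimately show ?thesis unfolding X_def trace_def by auto
  qed
  ultimately obtain t where S3: "stationary {\<alpha>\<in>?S2. trace l c (pp \<alpha>) \<alpha> \<delta> = t}"
    using stationary_fibre_of_countable[OF S2, where X="X \<times> X" and K="\<lambda>\<alpha>. trace l c (pp \<alpha>) \<alpha> \<delta>"]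
    by blast
  define H where "H \<alpha> = (if \<alpha> \<in> S then dom (pp \<alpha>) else {})" for \<alpha>
  have "countable (H \<alpha>)" for \<alpha> using pp unfolding H_def PE_def by (auto intro: countable_finite)
  then have "club {\<gamma>. \<forall>\<alpha><\<gamma>. \<forall>\<beta>\<in>H \<alpha>. \<beta> < \<gamma>}" by (rule club_closure_points)
  with S3 have S': "stationary ({\<alpha>\<in>?S2. trace l c (pp \<alpha>) \<alpha> \<delta> = t} \<inter> {\<gamma>. \<forall>\<alpha><\<gamma>. \<forall>\<beta>\<in>H \<alpha>. \<beta> < \<gamma>})"
    (is "stationary ?S'") by (rule stationary_Int_club)
  have mem: "\<alpha> \<in> S" "\<alpha> \<notin> E" "footprint l (pp \<alpha>) \<alpha> \<subseteq> {..\<delta>}" "trace l c (pp \<alpha>) \<alpha> \<delta> = t"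
    "\<forall>\<alpha>'<\<alpha>. \<forall>\<beta>\<in>H \<alpha>'. \<beta> < \<alpha>" if "\<alpha> \<in> ?S'" for \<alpha>
    using that SE by auto
  have coherent_less: "coherent l c (pp \<alpha>1) (pp \<alpha>2)" if "\<alpha>1 \<in> ?S'" "\<alpha>2 \<in> ?S'" "\<alpha>1 < \<alpha>2" for \<alpha>1 \<alpha>2
  proof (rule coherent_if_equal_traces[OF ls pp[OF mem(1)[OF that(1)]] pp[OF mem(1)[OF that(2)]]])
    show "dom (pp \<alpha>1) \<subseteq> {..<\<alpha>2}"
      using mem(1)[OF that(1)] mem(5)[OF that(2)] that(3) unfolding H_def by (auto simp: domI)
    show "trace l c (pp \<alpha>1) \<alpha>1 \<delta> = trace l c (pp \<alpha>2) \<alpha>2 \<delta>"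
      using mem(4)[OF that(1)] mem(4)[OF that(2)] by simp
  qed (use mem(2,3)[OF that(1)] mem(2,3)[OF that(2)] in auto)
  have coherent_all: "coherent l c (pp \<alpha>1) (pp \<alpha>2)" if "\<alpha>1 \<in> ?S'" "\<alpha>2 \<in> ?S'" for \<alpha>1 \<alpha>2
  proof (cases \<alpha>1 \<alpha>2 rule: linorder_cases)
    case less
    then show ?thesis using coherent_less[OF that] by simp
  next
    case equal
    then show ?thesis using coherent_refl[OF pp] mem(1)[OF that(1)] by simp
  next
    case greater
    then show ?thesis using coherent_less[OF that(2,1)] coherent_sym by blast
  qed
  show ?thesis
  proof (intro exI[of _ ?S'] conjI ballI)
    show "?S' \<subseteq> S" by auto
  qed (use S' coherent_all in auto)
qed

theorem lemma3:
  fixes l :: "'a::wellorder \<Rightarrow> nat \<Rightarrow> 'a"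
    and c :: "'a \<Rightarrow> 'a \<Rightarrow> nat"
    and E :: "'a set"
  assumes omega1_uncountable: "\<not> countable (UNIV :: 'a set)"
    and omega1_segments: "\<And>x::'a. countable {y. y < x}"
    and ls: "ladder_system l"
    and statE: "stationary E"
    and costatE: "stationary (UNIV - E)"
  shows "stat_pc (UNIV - E) (PE E l c)"
  unfolding stat_pc_def
proof (intro allI impI)
  interpret omega_one using omega1_uncountable omega1_segments by unfold_locales
  fix S pp assume "stationary S \<and> S \<subseteq> UNIV - E \<and> (\<forall>\<alpha>\<in>S. pp \<alpha> \<in> PE E l c)"
  then have S: "stationary S" "S \<inter> E = {}" and pp: "\<And>\<alpha>. \<alpha> \<in> S \<Longrightarrow> pp \<alpha> \<in> PE E l c" by auto
  have "\<exists>S'\<subseteq>S. stationary S' \<and> (\<forall>\<alpha>1\<in>S'. \<forall>\<alpha>2\<in>S'. coherent l c (pp \<alpha>1) (pp \<alpha>2))"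
    by (rule stationary_coherent_subset[OF ls S pp])
  then obtain S' where S': "S' \<subseteq> S" "stationary S'"
    and coh: "\<forall>\<alpha>1\<in>S'. \<forall>\<alpha>2\<in>S'. coherent l c (pp \<alpha>1) (pp \<alpha>2)"
    by blast
  have "centered (PE E l c) (pp ` S')"
  proof (rule centered_if_pairwise_coherent)
    show "pp ` S' \<subseteq> PE E l c" using S'(1) pp by blast
    show "\<And>p q. p \<in> pp ` S' \<Longrightarrow> q \<in> pp ` S' \<Longrightarrow> coherent l c p q" using coh by blast
  qed
  with S' show "\<exists>S'. stationary S' \<and> S' \<subseteq> S \<and> centered (PE E l c) (pp ` S')" by blast
qed

end
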